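(* Let $X \subseteq \mathbb{P}^N$ be an irreducible, nondegenerate variety over an algebraically closed field $\Bbbk$ of characteristic zero. Let $g$ be the generic rank and $m$ the maximal rank with respect to $X$. Then for each $k$ with $g+1 \leq k \leq m$ we have $W_k + X \subseteq W_{k-1}$. In particular $W_m \subset W_{m-1} \subset \dotsb \subset W_{g+1} \subset W_g = \mathbb{P}^N$.
   Context: For a nondegenerate variety $X\subseteq\mathbb{P}^N$, the rank $\operatorname{rank}_X(p)$ of a point $p\in\mathbb{P}^N$ is the least integer $r$ such that $p$ lies in the linear span of some $r$ distinct points of $X$. For $k\ge 1$, $W_k=\overline{\{p\in\mathbb{P}^N:\operatorname{rank}_X(p)=k\}}$ (Zariski closure). The generic rank $g$ is the rank attained on a Zariski dense open subset of $\mathbb{P}^N$; the maximal rank $m$ is the maximum value of $\operatorname{rank}_X$. For varieties $V_1,V_2\subseteq \mathbb{P}^N$, the join $V_1+V_2$ is the Zariski closure of the union of all lines spanned by pairs of distinct points $p\in V_1$, $q\in V_2$. *)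

theory Defs
  imports "HOL-Analysis.Finite_Cartesian_Product" "HOL-Computational_Algebra.Polynomial"
begin

text \<open>Projective space P^N over a field 'k is modelled via homogeneous coordinates:
  vectors in 'k^'n with CARD('n) = N+1; a point of P^N is represented by any nonzero
  vector, and subsets of P^N are represented by cones of nonzero vectors.\<close>

definition alg_closed :: "'k::field itself \<Rightarrow> bool" where
  "alg_closed _ \<longleftrightarrow> (\<forall>p :: 'k poly. degree p > 0 \<longrightarrow> (\<exists>x. poly p x = 0))"

definition proj_pts :: "('k::field ^ 'n::finite) set" where
  "proj_pts = {v. v \<noteq> 0}"

definition hom_poly :: "('k::field ^ 'n::finite \<Rightarrow> 'k) \<Rightarrow> bool" where
  "hom_poly f \<longleftrightarrow> (\<exists>d C c. finite C \<and> (\<forall>e\<in>C. (\<Sum>i\<in>UNIV. e i) = (d::nat)) \<and>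
      (\<forall>x. f x = (\<Sum>e\<in>C. c e * (\<Prod>i\<in>UNIV. (x $ i) ^ e i))))"

definition zariski_closed :: "('k::field ^ 'n::finite) set \<Rightarrow> bool" where
  "zariski_closed Z \<longleftrightarrow> (\<exists>F. (\<forall>f\<in>F. hom_poly f) \<and> Z = {x. x \<noteq> 0 \<and> (\<forall>f\<in>F. f x = 0)})"

definition zariski_open :: "('k::field ^ 'n::finite) set \<Rightarrow> bool" where
  "zariski_open U \<longleftrightarrow> U \<subseteq> proj_pts \<and> zariski_closed (proj_pts - U)"

definition zcl :: "('k::field ^ 'n::finite) set \<Rightarrow> ('k ^ 'n) set" where
  "zcl S = \<Inter>{Z. zariski_closed Z \<and> S \<subseteq> Z}"

definition irreducible_variety :: "('k::field ^ 'n::finite) set \<Rightarrow> bool" where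
  "irreducible_variety X \<longleftrightarrow> zariski_closed X \<and> X \<noteq> {} \<and>
     (\<forall>A B. zariski_closed A \<and> zariski_closed B \<and> X = A \<union> B \<longrightarrow> X = A \<or> X = B)"

definition nondegenerate :: "('k::field ^ 'n::finite) set \<Rightarrow> bool" where
  "nondegenerate X \<longleftrightarrow> (\<forall>a::'k^'n. (\<forall>x\<in>X. (\<Sum>i\<in>UNIV. a $ i * x $ i) = 0) \<longrightarrow> a = 0)"

definition distinct_pts :: "('k::field ^ 'n::finite) \<Rightarrow> 'k ^ 'n \<Rightarrow> bool" where
  "distinct_pts x y \<longleftrightarrow> (\<forall>c. y \<noteq> c *s x) \<and> (\<forall>c. x \<noteq> c *s y)"

definition in_span_of :: "('k::field ^ 'n::finite) set \<Rightarrow> 'k ^ 'n \<Rightarrow> nat \<Rightarrow> bool" where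
  "in_span_of X p r \<longleftrightarrow> (\<exists>(x :: nat \<Rightarrow> 'k ^ 'n) (c :: nat \<Rightarrow> 'k).
      (\<forall>i<r. x i \<in> X) \<and> (\<forall>i<r. \<forall>j<r. i \<noteq> j \<longrightarrow> distinct_pts (x i) (x j)) \<and>
      p = (\<Sum>i<r. c i *s x i))"

definition rank :: "('k::field ^ 'n::finite) set \<Rightarrow> 'k ^ 'n \<Rightarrow> nat" where
  "rank X p = (LEAST r. in_span_of X p r)"

definition W :: "('k::field ^ 'n::finite) set \<Rightarrow> nat \<Rightarrow> ('k ^ 'n) set" where
  "W X k = zcl {p \<in> proj_pts. rank X p = k}"

definition is_generic_rank :: "('k::field ^ 'n::finite) set \<Rightarrow> nat \<Rightarrow> bool" where
  "is_generic_rank X g \<longleftrightarrow> (\<exists>U. zariski_open U \<and> U \<noteq> {} \<and> zcl U = proj_pts \<and>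
      (\<forall>p\<in>U. rank X p = g))"

definition is_max_rank :: "('k::field ^ 'n::finite) set \<Rightarrow> nat \<Rightarrow> bool" where
  "is_max_rank X m \<longleftrightarrow> (\<exists>p\<in>proj_pts. rank X p = m) \<and> (\<forall>p\<in>proj_pts. rank X p \<le> m)"

definition join :: "('k::field ^ 'n::finite) set \<Rightarrow> ('k ^ 'n) set \<Rightarrow> ('k ^ 'n) set" where
  "join V1 V2 = zcl {z. z \<noteq> 0 \<and> (\<exists>p\<in>V1. \<exists>q\<in>V2. distinct_pts p q \<and>
      (\<exists>a b. z = a *s p + b *s q))}"

end

theory Submission
  imports Defs "HOL-Analysis.Cartesian_Space"
begin

text \<open>Let \<open>p\<close> have rank \<open>k > g\<close> and let \<open>f\<close> be a homogeneous polynomial vanishing on the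
  points of rank \<open>k - 1\<close>; we show \<open>f p = 0\<close>, so that \<open>p \<in> W X (k - 1)\<close>. Consider the sets
  \<open>S i = p + (X \<union> {0}) + \<dots> + (X \<union> {0})\<close> with \<open>i\<close> summands (\<open>translates X p i\<close> below).
  They are irreducible, and adding a point of \<open>X\<close> changes the rank by at most one. Hence, if
  \<open>f p \<noteq> 0\<close>, every polynomial not vanishing identically on \<open>S i\<close> is nonzero at a point of \<open>S i\<close>
  of rank at least \<open>k\<close>. Since \<open>p\<close> is a combination of \<open>k\<close> points of \<open>X\<close>, \<open>0 \<in> S k\<close>, so
  \<open>S (k + g)\<close> meets the open set \<open>U\<close> of points of rank \<open>g\<close>; a polynomial cutting out the
  complement of \<open>U\<close> is then nonzero at a point of \<open>U\<close> of rank at least \<open>k > g\<close>, which is absurd.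

  For the join, if \<open>v\<close> has rank \<open>k\<close> and \<open>q \<in> X\<close>, every \<open>a v + b q\<close> with \<open>a \<noteq> 0\<close> has rank at
  least \<open>k - 1 \<ge> g\<close> and so lies in \<open>W X (k - 1)\<close> by the chain of inclusions. Passing to
  \<open>v \<in> W X k\<close> and to \<open>a = 0\<close> only uses that a polynomial in one variable vanishing at all
  nonzero scalars is zero.\<close>

section \<open>Homogeneous polynomials and polynomial functions\<close>

definition monomial :: "('n::finite \<Rightarrow> nat) \<Rightarrow> 'k::field ^ 'n \<Rightarrow> 'k" where
  "monomial e x = (\<Prod>i\<in>UNIV. (x $ i) ^ e i)"

definition hom_poly_deg :: "nat \<Rightarrow> ('k::field ^ 'n::finite \<Rightarrow> 'k) \<Rightarrow> bool" where
  "hom_poly_deg d f \<longleftrightarrow> (\<exists>C c. finite C \<and> (\<forall>e\<in>C. (\<Sum>i\<in>UNIV. e i) = d) \<and>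
      (\<forall>x. f x = (\<Sum>e\<in>C. c e * monomial e x)))"

lemma hom_poly_iff_hom_poly_deg: "hom_poly f \<longleftrightarrow> (\<exists>d. hom_poly_deg d f)"
  unfolding hom_poly_def hom_poly_deg_def monomial_def by blast

lemma hom_poly_degE:
  assumes "hom_poly_deg d f"
  obtains C c where "finite C" "\<forall>e\<in>C. (\<Sum>i\<in>UNIV. e i) = d"
    "\<forall>x. f x = (\<Sum>e\<in>C. c e * monomial e x)"
  using assms unfolding hom_poly_deg_def by blast

lemma hom_poly_degI:
  assumes "finite J" "\<And>j. j \<in> J \<Longrightarrow> (\<Sum>i\<in>UNIV. E j i) = d"
    "\<And>x. f x = (\<Sum>j\<in>J. c j * monomial (E j) x)"
  shows "hom_poly_deg d f"
  unfolding hom_poly_deg_def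
proof (intro exI conjI allI)
  show "finite (E ` J)" "\<forall>e\<in>E ` J. (\<Sum>i\<in>UNIV. e i) = d"
    using assms(1,2) by auto
  fix x
  have "f x = (\<Sum>e\<in>E ` J. \<Sum>j\<in>{j\<in>J. E j = e}. c j * monomial (E j) x)"
    using assms(3) sum.image_gen[OF assms(1), of "\<lambda>j. c j * monomial (E j) x" E] by simp
  also have "\<dots> = (\<Sum>e\<in>E ` J. (\<Sum>j\<in>{j\<in>J. E j = e}. c j) * monomial e x)"
    by (intro sum.cong refl) (auto simp: sum_distrib_right)
  finally show "f x = (\<Sum>e\<in>E ` J. (\<lambda>e. \<Sum>j\<in>{j\<in>J. E j = e}. c j) e * monomial e x)" .
qed

lemma hom_poly_deg_zero: "hom_poly_deg d (\<lambda>x. 0)"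
  unfolding hom_poly_deg_def by (rule exI[of _ "{}"]) auto

lemma hom_poly_deg_const: "hom_poly_deg 0 (\<lambda>x. c)"
  unfolding hom_poly_deg_def
  by (rule exI[of _ "{\<lambda>i. 0}"], rule exI[of _ "\<lambda>e. c"]) (auto simp: monomial_def)

lemma hom_poly_deg_coord: "hom_poly_deg 1 (\<lambda>x. x $ i)"
proof (rule hom_poly_degI[where J = "{()}" and E = "\<lambda>_ j. if j = i then 1 else 0" and c = "\<lambda>_. 1"])
  fix x :: "'a ^ 'b"
  have "monomial (\<lambda>j. if j = i then 1 else 0) x = (\<Prod>j\<in>UNIV. if j = i then x $ j else 1)"
    unfolding monomial_def by (rule prod.cong) auto
  then show "x $ i = (\<Sum>j\<in>{()}. 1 * monomial (\<lambda>j. if j = i then 1 else 0) x)"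
    by simp
qed simp_all

lemma hom_poly_deg_add:
  fixes f g :: "'k::field ^ 'n::finite \<Rightarrow> 'k"
  assumes "hom_poly_deg d f" "hom_poly_deg d g"
  shows "hom_poly_deg d (\<lambda>x. f x + g x)"
proof -
  obtain C c where C: "finite C" "\<forall>e\<in>C. (\<Sum>i\<in>UNIV. e i) = d"
    "\<forall>x. f x = (\<Sum>e\<in>C. c e * monomial e x)"
    using assms(1) by (rule hom_poly_degE)
  obtain D c' where D: "finite D" "\<forall>e\<in>D. (\<Sum>i\<in>UNIV. e i) = d"
    "\<forall>x. g x = (\<Sum>e\<in>D. c' e * monomial e x)"
    using assms(2) by (rule hom_poly_degE)
  show ?thesis
    by (rule hom_poly_degI[where J = "C <+> D" and E = "case_sum id id" and c = "case_sum c c'"])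
      (use C D in \<open>auto simp: sum.Plus comp_def\<close>)
qed

lemma hom_poly_deg_sum:
  "finite A \<Longrightarrow> (\<And>j. j \<in> A \<Longrightarrow> hom_poly_deg d (F j)) \<Longrightarrow> hom_poly_deg d (\<lambda>x. \<Sum>j\<in>A. F j x)"
  by (induction A rule: finite_induct) (auto simp: hom_poly_deg_zero intro: hom_poly_deg_add)

lemma monomial_add: "monomial (\<lambda>i. e i + e' i) x = monomial e x * monomial e' x"
  unfolding monomial_def by (simp add: power_add prod.distrib)

lemma hom_poly_deg_mult:
  fixes f g :: "'k::field ^ 'n::finite \<Rightarrow> 'k"
  assumes "hom_poly_deg d f" "hom_poly_deg d' g"
  shows "hom_poly_deg (d + d') (\<lambda>x. f x * g x)"
proof -
  obtain C c where C: "finite C" "\<forall>e\<in>C. (\<Sum>i\<in>UNIV. e i) = d"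
    "\<forall>x. f x = (\<Sum>e\<in>C. c e * monomial e x)"
    using assms(1) by (rule hom_poly_degE)
  obtain D c' where D: "finite D" "\<forall>e\<in>D. (\<Sum>i\<in>UNIV. e i) = d'"
    "\<forall>x. g x = (\<Sum>e\<in>D. c' e * monomial e x)"
    using assms(2) by (rule hom_poly_degE)
  show ?thesis
  proof (rule hom_poly_degI[where J = "C \<times> D" and E = "\<lambda>(e, e') i. e i + e' i"
        and c = "\<lambda>(e, e'). c e * c' e'"])
    fix x
    have "f x * g x = (\<Sum>e\<in>C. \<Sum>e'\<in>D. (c e * monomial e x) * (c' e' * monomial e' x))"
      using C D by (simp add: sum_product)
    then show "f x * g x = (\<Sum>j\<in>C \<times> D. (case j of (e, e') \<Rightarrow> c e * c' e') *
        monomial (case j of (e, e') \<Rightarrow> \<lambda>i. e i + e' i) x)"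
      by (simp add: sum.cartesian_product monomial_add mult_ac split_def)
  qed (use C D in \<open>auto simp: sum.distrib\<close>)
qed

lemma hom_poly_deg_smult: "hom_poly_deg d f \<Longrightarrow> f (t *s x) = t ^ d * f x"
proof (elim hom_poly_degE)
  fix C c
  assume C: "\<forall>e\<in>C. (\<Sum>i\<in>UNIV. e i) = d" "\<forall>x. f x = (\<Sum>e\<in>C. c e * monomial e x)"
  have "monomial e (t *s x) = t ^ (\<Sum>i\<in>UNIV. e i) * monomial e x" for e
    unfolding monomial_def by (simp add: power_mult_distrib prod.distrib power_sum)
  then show ?thesis using C by (simp add: sum_distrib_left mult_ac)
qed

inductive poly_fun :: "('k::field ^ 'n::finite \<Rightarrow> 'k) \<Rightarrow> bool" where
  poly_fun_const: "poly_fun (\<lambda>x. c)"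
| poly_fun_coord: "poly_fun (\<lambda>x. x $ i)"
| poly_fun_add: "poly_fun a \<Longrightarrow> poly_fun b \<Longrightarrow> poly_fun (\<lambda>x. a x + b x)"
| poly_fun_mult: "poly_fun a \<Longrightarrow> poly_fun b \<Longrightarrow> poly_fun (\<lambda>x. a x * b x)"

lemma poly_fun_sum:
  "finite A \<Longrightarrow> (\<And>j. j \<in> A \<Longrightarrow> poly_fun (F j)) \<Longrightarrow> poly_fun (\<lambda>x. \<Sum>j\<in>A. F j x)"
  by (induction A rule: finite_induct) (auto intro: poly_fun.intros)

lemma poly_fun_prod:
  "finite A \<Longrightarrow> (\<And>j. j \<in> A \<Longrightarrow> poly_fun (F j)) \<Longrightarrow> poly_fun (\<lambda>x. \<Prod>j\<in>A. F j x)"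
  by (induction A rule: finite_induct) (auto intro: poly_fun.intros)

lemma poly_fun_power: "poly_fun a \<Longrightarrow> poly_fun (\<lambda>x. a x ^ n)"
  by (induction n) (auto intro: poly_fun.intros)

lemma poly_fun_hom_poly_deg: "hom_poly_deg d f \<Longrightarrow> poly_fun f"
proof (elim hom_poly_degE)
  fix C c assume "finite C" "\<forall>x. f x = (\<Sum>e\<in>C. c e * monomial e x)"
  then have "f = (\<lambda>x. \<Sum>e\<in>C. c e * (\<Prod>i\<in>UNIV. (x $ i) ^ e i))"
    unfolding monomial_def by blast
  then show "poly_fun f"
    by (simp add: \<open>finite C\<close> poly_fun_sum poly_fun_prod poly_fun_power poly_fun.intros)
qed

lemma poly_fun_hom_poly: "hom_poly f \<Longrightarrow> poly_fun f"
  using poly_fun_hom_poly_deg hom_poly_iff_hom_poly_deg by blast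

lemma poly_fun_affine: "poly_fun a \<Longrightarrow> poly_fun (\<lambda>x. a (c *s x + y))"
  by (induction rule: poly_fun.induct) (auto intro!: poly_fun.intros)

lemma poly_fun_translate: "poly_fun a \<Longrightarrow> poly_fun (\<lambda>x. a (x + y))"
  using poly_fun_affine[of a 1 y] by simp

lemma poly_fun_line: "poly_fun a \<Longrightarrow> \<exists>P. \<forall>t. a (t *s x + y) = poly P t"
proof (induction rule: poly_fun.induct)
  case (poly_fun_const c)
  show ?case by (intro exI[of _ "[:c:]"]) simp
next
  case (poly_fun_coord i)
  show ?case by (intro exI[of _ "[:y $ i, x $ i:]"]) (simp add: algebra_simps)
next
  case (poly_fun_add a b)
  then obtain P Q where "\<forall>t. a (t *s x + y) = poly P t" "\<forall>t. b (t *s x + y) = poly Q t" by blast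
  then show ?case by (intro exI[of _ "P + Q"]) simp
next
  case (poly_fun_mult a b)
  then obtain P Q where "\<forall>t. a (t *s x + y) = poly P t" "\<forall>t. b (t *s x + y) = poly Q t" by blast
  then show ?case by (intro exI[of _ "P * Q"]) simp
qed

lemma poly_fun_line_eq_0:
  fixes a :: "'k::field_char_0 ^ 'n::finite \<Rightarrow> 'k"
  assumes "poly_fun a" and off_0: "\<And>t. t \<noteq> 0 \<Longrightarrow> a (t *s x + y) = 0"
  shows "a (t *s x + y) = 0"
proof -
  obtain P where P: "\<And>t. a (t *s x + y) = poly P t"
    using poly_fun_line[OF assms(1)] by blast
  have "P = 0"
  proof (rule ccontr)
    assume "P \<noteq> 0"
    then have "finite {t. poly P t = 0}" by (rule poly_roots_finite)
    moreover have "UNIV \<subseteq> insert 0 {t. poly P t = 0}" using off_0 P by auto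
    ultimately show False using infinite_UNIV_char_0[where 'a='k] finite_subset by auto
  qed
  then show ?thesis using P by simp
qed

definition hom_components :: "('k::field ^ 'n::finite \<Rightarrow> 'k) \<Rightarrow> (nat \<Rightarrow> 'k ^ 'n \<Rightarrow> 'k) \<Rightarrow> bool" where
  "hom_components a h \<longleftrightarrow> (\<forall>d. hom_poly_deg d (h d)) \<and>
     (\<forall>x. \<exists>P. (\<forall>d. coeff P d = h d x) \<and> (\<forall>t. a (t *s x) = poly P t))"

lemma hom_components_const: "hom_components (\<lambda>x. c) (\<lambda>d x. if d = 0 then c else 0)"
  unfolding hom_components_def
proof (intro conjI allI)
  fix d show "hom_poly_deg d (\<lambda>x. if d = 0 then c else 0)"
    by (cases "d = 0") (simp_all add: hom_poly_deg_const hom_poly_deg_zero)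
next
  fix x show "\<exists>P. (\<forall>d. coeff P d = (if d = 0 then c else 0)) \<and> (\<forall>t. c = poly P t)"
    by (intro exI[of _ "[:c:]"]) (simp add: coeff_pCons split: nat.split)
qed

lemma hom_components_coord: "hom_components (\<lambda>x. x $ i) (\<lambda>d x. if d = 1 then x $ i else 0)"
  unfolding hom_components_def
proof (intro conjI allI)
  fix d show "hom_poly_deg d (\<lambda>x. if d = 1 then x $ i else 0)"
    using hom_poly_deg_coord[of i] by (cases "d = 1") (simp_all add: hom_poly_deg_zero)
next
  fix x show "\<exists>P. (\<forall>d. coeff P d = (if d = 1 then x $ i else 0)) \<and> (\<forall>t. (t *s x) $ i = poly P t)"
    by (intro exI[of _ "[:0, x $ i:]"]) (auto simp: coeff_pCons split: nat.split)
qed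

lemma hom_components_add:
  assumes "hom_components a h" "hom_components b h'"
  shows "hom_components (\<lambda>x. a x + b x) (\<lambda>d x. h d x + h' d x)"
  unfolding hom_components_def
proof (intro conjI allI)
  fix d show "hom_poly_deg d (\<lambda>x. h d x + h' d x)"
    using assms unfolding hom_components_def by (simp add: hom_poly_deg_add)
next
  fix x
  obtain P Q where "\<forall>d. coeff P d = h d x" "\<forall>t. a (t *s x) = poly P t"
    "\<forall>d. coeff Q d = h' d x" "\<forall>t. b (t *s x) = poly Q t"
    using assms unfolding hom_components_def by meson
  then show "\<exists>P. (\<forall>d. coeff P d = h d x + h' d x) \<and> (\<forall>t. a (t *s x) + b (t *s x) = poly P t)"
    by (intro exI[of _ "P + Q"]) simp
qed

lemma hom_components_mult:
  assumes "hom_components a h" "hom_components b h'"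
  shows "hom_components (\<lambda>x. a x * b x) (\<lambda>d x. \<Sum>i\<le>d. h i x * h' (d - i) x)"
  unfolding hom_components_def
proof (intro conjI allI)
  fix d
  have "hom_poly_deg d (\<lambda>x. h i x * h' (d - i) x)" if "i \<le> d" for i
    using assms hom_poly_deg_mult[of i "h i" "d - i" "h' (d - i)"] that
    unfolding hom_components_def by simp
  then show "hom_poly_deg d (\<lambda>x. \<Sum>i\<le>d. h i x * h' (d - i) x)"
    by (intro hom_poly_deg_sum) auto
next
  fix x
  obtain P Q where "\<forall>d. coeff P d = h d x" "\<forall>t. a (t *s x) = poly P t"
    "\<forall>d. coeff Q d = h' d x" "\<forall>t. b (t *s x) = poly Q t"
    using assms unfolding hom_components_def by meson
  then show "\<exists>P. (\<forall>d. coeff P d = (\<Sum>i\<le>d. h i x * h' (d - i) x)) \<and>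
      (\<forall>t. a (t *s x) * b (t *s x) = poly P t)"
    by (intro exI[of _ "P * Q"]) (simp add: coeff_mult)
qed

lemma poly_fun_hom_components: "poly_fun a \<Longrightarrow> \<exists>h. hom_components a h"
  by (induction rule: poly_fun.induct)
    (blast intro: hom_components_const hom_components_coord hom_components_add hom_components_mult)+

section \<open>Zariski closed sets\<close>

definition zero_set :: "('k::field ^ 'n::finite \<Rightarrow> 'k) set \<Rightarrow> ('k ^ 'n) set" where
  "zero_set F = {x. x \<noteq> 0 \<and> (\<forall>f\<in>F. f x = 0)}"

lemma zariski_closed_zero_set: "\<forall>f\<in>F. hom_poly f \<Longrightarrow> zariski_closed (zero_set F)"
  unfolding zariski_closed_def zero_set_def by blast

lemma zariski_closedE:
  assumes "zariski_closed Z"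
  obtains F where "\<forall>f\<in>F. hom_poly f" "Z = zero_set F"
  using assms unfolding zariski_closed_def zero_set_def by blast

lemma zariski_closed_subset_proj_pts: "zariski_closed Z \<Longrightarrow> Z \<subseteq> proj_pts"
  by (auto elim!: zariski_closedE simp: zero_set_def proj_pts_def)

lemma zariski_closed_Int:
  assumes "zariski_closed A" "zariski_closed B"
  shows "zariski_closed (A \<inter> B)"
proof -
  obtain F where F: "\<forall>f\<in>F. hom_poly f" "A = zero_set F"
    using assms(1) by (rule zariski_closedE)
  obtain G where G: "\<forall>f\<in>G. hom_poly f" "B = zero_set G"
    using assms(2) by (rule zariski_closedE)
  have "A \<inter> B = zero_set (F \<union> G)"
    using F(2) G(2) by (auto simp: zero_set_def)
  moreover have "zariski_closed (zero_set (F \<union> G))"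
    using F(1) G(1) by (intro zariski_closed_zero_set) blast
  ultimately show ?thesis by simp
qed

lemma zariski_closed_smult:
  assumes "zariski_closed Z" "x \<in> Z" "t \<noteq> 0"
  shows "t *s x \<in> Z"
proof -
  obtain F where F: "\<forall>f\<in>F. hom_poly f" and Z: "Z = zero_set F"
    using assms(1) by (rule zariski_closedE)
  have x: "x \<noteq> 0" "\<forall>f\<in>F. f x = 0"
    using assms(2) unfolding Z zero_set_def by auto
  have "f (t *s x) = 0" if f: "f \<in> F" for f
  proof -
    obtain d where "hom_poly_deg d f"
      using F(1) f hom_poly_iff_hom_poly_deg by blast
    then show ?thesis using x(2) f by (simp add: hom_poly_deg_smult)
  qed
  moreover have "t *s x \<noteq> 0" using x(1) assms(3) by (simp add: vec.scale_eq_0_iff)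
  ultimately show ?thesis unfolding Z zero_set_def by blast
qed

lemma zcl_eq_zero_set:
  assumes "S \<subseteq> proj_pts"
  shows "zcl S = zero_set {f. hom_poly f \<and> (\<forall>s\<in>S. f s = 0)}"
proof
  show "zcl S \<subseteq> zero_set {f. hom_poly f \<and> (\<forall>s\<in>S. f s = 0)}"
    unfolding zcl_def using assms
    by (intro Inter_lower CollectI conjI zariski_closed_zero_set) (auto simp: zero_set_def proj_pts_def)
  show "zero_set {f. hom_poly f \<and> (\<forall>s\<in>S. f s = 0)} \<subseteq> zcl S"
    unfolding zcl_def
  proof (intro Inter_greatest, elim CollectE conjE zariski_closedE)
    fix Z F assume "S \<subseteq> Z" "\<forall>f\<in>F. hom_poly f" "Z = zero_set F"
    then show "zero_set {f. hom_poly f \<and> (\<forall>s\<in>S. f s = 0)} \<subseteq> Z"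
      by (auto simp: zero_set_def subset_iff)
  qed
qed

lemma zariski_closed_zcl: "S \<subseteq> proj_pts \<Longrightarrow> zariski_closed (zcl S)"
  unfolding zcl_eq_zero_set by (rule zariski_closed_zero_set) blast

lemma zcl_least: "zariski_closed Z \<Longrightarrow> S \<subseteq> Z \<Longrightarrow> zcl S \<subseteq> Z"
  unfolding zcl_def by blast

lemma zcl_superset: "S \<subseteq> zcl S"
  unfolding zcl_def by blast

lemma zcl_mono: "S \<subseteq> T \<Longrightarrow> zcl S \<subseteq> zcl T"
  unfolding zcl_def by blast

lemma zariski_open_separating_poly:
  assumes "zariski_open U" "u \<in> U"
  obtains h where "hom_poly h" "h u \<noteq> 0" "\<And>s. s \<noteq> 0 \<Longrightarrow> h s \<noteq> 0 \<Longrightarrow> s \<in> U"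
proof -
  obtain F where F: "\<forall>f\<in>F. hom_poly f" "proj_pts - U = zero_set F"
    using assms(1) unfolding zariski_open_def by (elim conjE zariski_closedE)
  have "u \<notin> zero_set F" "u \<noteq> 0"
    using F(2) assms unfolding zariski_open_def by (auto simp: proj_pts_def)
  then obtain h where h: "h \<in> F" "h u \<noteq> 0" by (auto simp: zero_set_def)
  show ?thesis
  proof (rule that)
    show "hom_poly h" using F(1) h(1) by blast
    show "h u \<noteq> 0" by (rule h(2))
    fix s assume "s \<noteq> 0" "h s \<noteq> 0"
    then show "s \<in> U" using F(2) h(1) by (auto simp: zero_set_def proj_pts_def)
  qed
qed

text \<open>The line through \<open>x\<close> lies in the zero set of \<open>a\<close> iff every homogeneous component of \<open>a\<close>
  vanishes at \<open>x\<close>.\<close>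
lemma zariski_closed_cone_zeros:
  fixes a :: "'k::field_char_0 ^ 'n::finite \<Rightarrow> 'k"
  assumes "poly_fun a"
  shows "zariski_closed {x. x \<noteq> 0 \<and> (\<forall>t. a (t *s x) = 0)}"
proof -
  obtain h where h: "\<forall>d. hom_poly_deg d (h d)"
    and line: "\<forall>x. \<exists>P. (\<forall>d. coeff P d = h d x) \<and> (\<forall>t. a (t *s x) = poly P t)"
    using poly_fun_hom_components[OF assms] unfolding hom_components_def by blast
  have "(\<forall>t. a (t *s x) = 0) \<longleftrightarrow> (\<forall>d. h d x = 0)" for x
  proof -
    obtain P where P: "\<forall>d. coeff P d = h d x" "\<forall>t. a (t *s x) = poly P t"
      using line by blast
    have "(\<forall>t. poly P t = 0) \<longleftrightarrow> (\<forall>d. coeff P d = 0)"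
      using poly_all_0_iff_0[of P] poly_eq_iff[of P 0] by simp
    then show ?thesis using P by simp
  qed
  then have "{x. x \<noteq> 0 \<and> (\<forall>t. a (t *s x) = 0)} = zero_set (range h)"
    by (auto simp: zero_set_def)
  moreover have "\<forall>f\<in>range h. hom_poly f"
    using h hom_poly_iff_hom_poly_deg by blast
  ultimately show ?thesis using zariski_closed_zero_set by metis
qed

lemma poly_fun_zero_on_zcl:
  fixes a :: "'k::field_char_0 ^ 'n::finite \<Rightarrow> 'k"
  assumes "poly_fun a" "S \<subseteq> proj_pts" "\<And>v t. v \<in> S \<Longrightarrow> t \<noteq> 0 \<Longrightarrow> a (t *s v) = 0"
    and "p \<in> zcl S"
  shows "a p = 0"
proof -
  let ?Z = "{x. x \<noteq> 0 \<and> (\<forall>t. a (t *s x) = 0)}"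
  have "a (t *s v) = 0" if "v \<in> S" for v t
    using poly_fun_line_eq_0[OF assms(1), of v 0 t] assms(3)[OF that] by simp
  then have "S \<subseteq> ?Z" using assms(2) by (auto simp: proj_pts_def)
  then have "p \<in> ?Z"
    using zcl_least[OF zariski_closed_cone_zeros[OF assms(1)]] assms(4) by blast
  then have "a (1 *s p) = 0" by blast
  then show ?thesis by (simp only: vector_smult_lid)
qed

lemma zcl_lines_in_closed:
  fixes S :: "('k::field_char_0 ^ 'n::finite) set"
  assumes "zariski_closed Z" "S \<subseteq> proj_pts"
    and lines: "\<And>v a. v \<in> S \<Longrightarrow> a \<noteq> 0 \<Longrightarrow> a *s v + b *s q \<in> Z"
    and "p \<in> zcl S" "a *s p + b *s q \<noteq> 0"
  shows "a *s p + b *s q \<in> Z"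
proof -
  obtain F where F: "\<forall>f\<in>F. hom_poly f" and Z: "Z = zero_set F"
    using assms(1) by (rule zariski_closedE)
  have "f (a *s p + b *s q) = 0" if f: "f \<in> F" for f
  proof (rule poly_fun_line_eq_0)
    show "poly_fun f" using F f by (simp add: poly_fun_hom_poly)
    fix a' :: 'k assume "a' \<noteq> 0"
    show "f (a' *s p + b *s q) = 0"
    proof (rule poly_fun_zero_on_zcl[where a = "\<lambda>v. f (a' *s v + b *s q)", OF _ assms(2) _ assms(4)])
      show "poly_fun (\<lambda>v. f (a' *s v + b *s q))" by (rule poly_fun_affine) fact
      fix v and t :: 'k assume "v \<in> S" "t \<noteq> 0"
      then have "(a' * t) *s v + b *s q \<in> Z" using lines \<open>a' \<noteq> 0\<close> by simp
      then show "f (a' *s (t *s v) + b *s q) = 0"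
        using f unfolding Z zero_set_def by (simp add: vector_smult_assoc)
    qed
  qed
  then show ?thesis using assms(5) unfolding Z zero_set_def by blast
qed

section \<open>Irreducibility\<close>

lemma irreducible_variety_closed: "irreducible_variety X \<Longrightarrow> zariski_closed X"
  unfolding irreducible_variety_def by blast

text \<open>Affine irreducibility of an arbitrary set of vectors: its ideal of polynomial functions
  is prime.\<close>
definition poly_irreducible :: "('k::field ^ 'n::finite) set \<Rightarrow> bool" where
  "poly_irreducible S \<longleftrightarrow> (\<forall>a b. poly_fun a \<longrightarrow> poly_fun b \<longrightarrow> (\<forall>s\<in>S. a s * b s = 0) \<longrightarrow>
      (\<forall>s\<in>S. a s = 0) \<or> (\<forall>s\<in>S. b s = 0))"

lemma poly_irreducible_singleton: "poly_irreducible {p}"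
  unfolding poly_irreducible_def by simp

lemma poly_irreducible_sums:
  assumes S: "poly_irreducible S" and T: "poly_irreducible T"
  shows "poly_irreducible {s + t | s t. s \<in> S \<and> t \<in> T}"
  unfolding poly_irreducible_def
proof (intro allI impI)
  fix a b :: "'a ^ 'b \<Rightarrow> 'a"
  assume a: "poly_fun a" and b: "poly_fun b"
    and ab: "\<forall>z\<in>{s + t | s t. s \<in> S \<and> t \<in> T}. a z * b z = 0"
  show "(\<forall>z\<in>{s + t | s t. s \<in> S \<and> t \<in> T}. a z = 0) \<or> (\<forall>z\<in>{s + t | s t. s \<in> S \<and> t \<in> T}. b z = 0)"
  proof (rule ccontr)
    assume "\<not> ?thesis"
    then obtain s1 t1 s2 t2 where st: "s1 \<in> S" "t1 \<in> T" "a (s1 + t1) \<noteq> 0"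
      "s2 \<in> S" "t2 \<in> T" "b (s2 + t2) \<noteq> 0"
      by blast
    have slice: "(\<forall>t\<in>T. a (s + t) = 0) \<or> (\<forall>t\<in>T. b (s + t) = 0)" if "s \<in> S" for s
    proof -
      have "poly_fun (\<lambda>t. a (s + t))" "poly_fun (\<lambda>t. b (s + t))"
        using poly_fun_translate[OF a, of s] poly_fun_translate[OF b, of s] by (simp_all add: add.commute)
      then show ?thesis using T ab \<open>s \<in> S\<close> unfolding poly_irreducible_def by blast
    qed
    have "\<not> (\<forall>s\<in>S. a (s + t1) * b (s + t2) = 0)"
      using S poly_fun_translate[OF a] poly_fun_translate[OF b] st
      unfolding poly_irreducible_def by blast
    then obtain s where "s \<in> S" "a (s + t1) \<noteq> 0" "b (s + t2) \<noteq> 0" by auto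
    then show False using slice st by blast
  qed
qed

lemma smult_in_cone: "zariski_closed X \<Longrightarrow> x \<in> X \<Longrightarrow> c *s x \<in> insert 0 X"
  using zariski_closed_smult[of X x c] by (cases "c = 0") auto

text \<open>On the line through a point of \<open>X\<close>, \<open>a b\<close> becomes a product of one-variable polynomials
  that vanishes identically, so one factor does. Hence \<open>X\<close> is covered by the closed sets of
  points whose line lies in the zero set of \<open>a\<close>, resp. of \<open>b\<close>, and irreducibility picks one.\<close>
lemma poly_irreducible_cone:
  fixes X :: "('k::field_char_0 ^ 'n::finite) set"
  assumes "irreducible_variety X"
  shows "poly_irreducible (insert 0 X)"
  unfolding poly_irreducible_def
proof (intro allI impI)
  fix a b :: "'k ^ 'n \<Rightarrow> 'k"
  assume a: "poly_fun a" and b: "poly_fun b" and ab: "\<forall>s\<in>insert 0 X. a s * b s = 0"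
  have X: "zariski_closed X" "X \<noteq> {}"
    and irr: "\<And>A B. zariski_closed A \<Longrightarrow> zariski_closed B \<Longrightarrow> X = A \<union> B \<Longrightarrow> X = A \<or> X = B"
    using assms unfolding irreducible_variety_def by blast+
  define Z where "Z c = {x. x \<noteq> 0 \<and> (\<forall>t. c (t *s x) = 0)}" for c :: "'k ^ 'n \<Rightarrow> 'k"
  have "x \<in> Z a \<union> Z b" if x: "x \<in> X" for x
  proof -
    obtain P Q where P: "\<And>t. a (t *s x) = poly P t" and Q: "\<And>t. b (t *s x) = poly Q t"
      using poly_fun_line[OF a, of x 0] poly_fun_line[OF b, of x 0] by auto
    have "a (t *s x) * b (t *s x) = 0" for t
      using ab smult_in_cone[OF X(1) x, of t] by blast
    then have "poly (P * Q) t = 0" for t by (simp add: P Q)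
    then have "P = 0 \<or> Q = 0"
      using poly_all_0_iff_0[of "P * Q"] by simp
    moreover have "x \<noteq> 0" using x zariski_closed_subset_proj_pts[OF X(1)] by (auto simp: proj_pts_def)
    ultimately show ?thesis using P Q unfolding Z_def by auto
  qed
  then have "X = (X \<inter> Z a) \<union> (X \<inter> Z b)" by blast
  then have "X \<subseteq> Z a \<or> X \<subseteq> Z b"
    using irr zariski_closed_Int[OF X(1)] zariski_closed_cone_zeros[OF a] zariski_closed_cone_zeros[OF b]
    unfolding Z_def by blast
  moreover have "\<forall>s\<in>insert 0 X. c s = 0" if c: "X \<subseteq> Z c" for c
  proof -
    obtain x where "x \<in> X" using X(2) by blast
    then have "c (0 *s x) = 0" using c unfolding Z_def by blast
    moreover have "c (1 *s s) = 0" if "s \<in> X" for s using c that unfolding Z_def by blast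
    ultimately show ?thesis by simp
  qed
  ultimately show "(\<forall>s\<in>insert 0 X. a s = 0) \<or> (\<forall>s\<in>insert 0 X. b s = 0)" by blast
qed

section \<open>Rank\<close>

lemma span_eq_UNIV_if_nondegenerate:
  fixes X :: "('k::field ^ 'n::finite) set"
  assumes "nondegenerate X"
  shows "vec.span X = UNIV"
proof (rule ccontr)
  assume "vec.span X \<noteq> UNIV"
  then obtain v where "v \<notin> vec.span X" by blast
  obtain B where B: "B \<subseteq> X" "vec.independent B" "X \<subseteq> vec.span B"
    by (rule vec.maximal_independent_subset)
  have "v \<notin> vec.span B" using \<open>v \<notin> vec.span X\<close> B(1) vec.span_mono by blast
  then have "vec.independent (insert v B)" using B(2) by (rule vec.independent_insertI)
  define i :: 'n where "i = undefined"
  obtain g :: "'k ^ 'n \<Rightarrow> 'k ^ 'n" where g: "Vector_Spaces.linear (*s) (*s) g"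
    "\<forall>x\<in>insert v B. g x = (if x = v then axis i 1 else 0)"
    using vec.linear_independent_extend[OF \<open>vec.independent (insert v B)\<close>,
        of "\<lambda>x. if x = v then axis i 1 else 0"] by blast
  define a :: "'k ^ 'n" where "a = (\<chi> j. g (axis j 1) $ i)"
  have ga: "g x $ i = (\<Sum>j\<in>UNIV. a $ j * x $ j)" for x
    using linear_componentwise[OF g(1), of x i] by (simp add: a_def mult.commute)
  have "g x = 0" if "x \<in> X" for x
    using vec.linear_eq_0_on_span[OF g(1), of B x] g(2) B(3) that \<open>v \<notin> vec.span B\<close> vec.span_base
    by fastforce
  then have "\<forall>x\<in>X. (\<Sum>j\<in>UNIV. a $ j * x $ j) = 0" by (simp flip: ga)
  then have "a = 0" using assms unfolding nondegenerate_def by blast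
  then have "g v $ i = 0" using ga by simp
  moreover have "g v $ i = 1" using g(2) by simp
  ultimately show False by simp
qed

lemma in_span_of_zero: "in_span_of X 0 0"
  unfolding in_span_of_def by simp

lemma in_span_of_0D: "in_span_of X v 0 \<Longrightarrow> v = 0"
  unfolding in_span_of_def by simp

lemma in_span_of_smult: "in_span_of X w r \<Longrightarrow> in_span_of X (c *s w) r"
proof -
  assume "in_span_of X w r"
  then obtain x d where x: "\<forall>i<r. x i \<in> X" "\<forall>i<r. \<forall>j<r. i \<noteq> j \<longrightarrow> distinct_pts (x i) (x j)"
    and w: "w = (\<Sum>i<r. d i *s x i)"
    unfolding in_span_of_def by blast
  have "c *s w = (\<Sum>i<r. (c * d i) *s x i)"
    unfolding w vec.scale_sum_right vector_smult_assoc ..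
  then show ?thesis using x unfolding in_span_of_def
    by (intro exI[of _ x] exI[of _ "\<lambda>i. c * d i"]) simp
qed

lemma smult_if_not_distinct_pts:
  assumes "x \<noteq> 0" "\<not> distinct_pts y x"
  shows "\<exists>e. y = e *s x"
proof -
  consider c where "x = c *s y" | c where "y = c *s x"
    using assms(2) unfolding distinct_pts_def by blast
  then show ?thesis
  proof cases
    case (1 c)
    then have "y = inverse c *s x" using assms(1) by (auto simp: vector_smult_assoc)
    then show ?thesis by blast
  qed blast
qed

lemma in_span_of_add:
  assumes "zariski_closed X" and w: "in_span_of X w r" and "y \<in> X"
  shows "\<exists>r'\<le>Suc r. in_span_of X (w + y) r'"
proof -
  obtain x c where x: "\<forall>i<r. x i \<in> X" and dist: "\<forall>i<r. \<forall>j<r. i \<noteq> j \<longrightarrow> distinct_pts (x i) (x j)"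
    and w_eq: "w = (\<Sum>i<r. c i *s x i)"
    using w unfolding in_span_of_def by blast
  show ?thesis
  proof (cases "\<exists>j<r. \<not> distinct_pts y (x j)")
    case True
    then obtain j where j: "j < r" "\<not> distinct_pts y (x j)" by blast
    have "x j \<noteq> 0" using x j(1) zariski_closed_subset_proj_pts[OF assms(1)] by (auto simp: proj_pts_def)
    then obtain e where e: "y = e *s x j" using smult_if_not_distinct_pts j(2) by blast
    have "w + y = (\<Sum>i<r. (c i + (if i = j then e else 0)) *s x i)"
      using j(1) unfolding w_eq e
      by (simp add: vector_sadd_rdistrib sum.distrib if_distrib[of "\<lambda>a. a *s _"] cong: if_cong)
    then have "in_span_of X (w + y) r" using x dist unfolding in_span_of_def
      by (intro exI[of _ x] exI[of _ "\<lambda>i. c i + (if i = j then e else 0)"]) simp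
    then show ?thesis using le_SucI by blast
  next
    case False
    have "\<forall>i<Suc r. (x(r := y)) i \<in> X" using x \<open>y \<in> X\<close> by (simp add: less_Suc_eq)
    moreover have "\<forall>i<Suc r. \<forall>j<Suc r. i \<noteq> j \<longrightarrow> distinct_pts ((x(r := y)) i) ((x(r := y)) j)"
      using dist False by (auto simp: less_Suc_eq distinct_pts_def)
    moreover have "w + y = (\<Sum>i<Suc r. (c(r := 1)) i *s (x(r := y)) i)"
      unfolding w_eq by simp
    ultimately have "in_span_of X (w + y) (Suc r)" unfolding in_span_of_def
      by (intro exI[of _ "x(r := y)"] exI[of _ "c(r := 1)"]) simp
    then show ?thesis by blast
  qed
qed

lemma in_span_of_exists:
  assumes "zariski_closed X" "nondegenerate X"
  shows "\<exists>r. in_span_of X v r"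
proof -
  have "v \<in> vec.span X" using span_eq_UNIV_if_nondegenerate[OF assms(2)] by simp
  then show ?thesis
  proof (induction rule: vec.span_induct_alt)
    case base
    then show ?case using in_span_of_zero by blast
  next
    case (step c x y)
    then obtain r where r: "in_span_of X y r" by blast
    show ?case
    proof (cases "c = 0")
      case True
      then show ?thesis using r by auto
    next
      case False
      then have "c *s x \<in> X" using zariski_closed_smult[OF assms(1) step(1)] by blast
      then show ?thesis using in_span_of_add[OF assms(1) r] by (metis add.commute)
    qed
  qed
qed

context
  fixes X :: "('k::field ^ 'n::finite) set"
  assumes closed: "zariski_closed X" and nondegenerate: "nondegenerate X"
begin

lemma in_span_of_rank: "in_span_of X v (Defs.rank X v)"
  unfolding Defs.rank_def using in_span_of_exists[OF closed nondegenerate] by (rule LeastI_ex)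

lemma rank_le: "in_span_of X v r \<Longrightarrow> Defs.rank X v \<le> r"
  unfolding Defs.rank_def by (rule Least_le)

lemma rank_eq_0_iff: "Defs.rank X v = 0 \<longleftrightarrow> v = 0"
  using rank_le[OF in_span_of_zero] in_span_of_rank[of v] in_span_of_0D by fastforce

lemma rank_smult_le: "Defs.rank X (c *s w) \<le> Defs.rank X w"
  by (rule rank_le[OF in_span_of_smult[OF in_span_of_rank]])

lemma rank_smult: "t \<noteq> 0 \<Longrightarrow> Defs.rank X (t *s w) = Defs.rank X w"
  using rank_smult_le[of t w] rank_smult_le[of "inverse t" "t *s w"]
  by (simp add: vector_smult_assoc)

lemma rank_add_le: "y \<in> insert 0 X \<Longrightarrow> Defs.rank X (w + y) \<le> Suc (Defs.rank X w)"
  using in_span_of_add[OF closed in_span_of_rank[of w], of y] rank_le by fastforce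

lemma rank_le_Suc_rank_add:
  assumes "y \<in> insert 0 X"
  shows "Defs.rank X w \<le> Suc (Defs.rank X (w + y))"
proof -
  have "(- 1) *s y \<in> insert 0 X" using assms smult_in_cone[OF closed, of y "- 1"] by auto
  then have "Defs.rank X ((w + y) + (- 1) *s y) \<le> Suc (Defs.rank X (w + y))" by (rule rank_add_le)
  moreover have "(w + y) + (- 1) *s y = w" by (simp add: vec_eq_iff)
  ultimately show ?thesis by simp
qed

end

lemma generic_rank_pos:
  assumes "zariski_closed X" "nondegenerate X" "is_generic_rank X g"
  shows "0 < g"
proof -
  obtain U where U: "zariski_open U" "U \<noteq> {}" "\<forall>u\<in>U. Defs.rank X u = g"
    using assms(3) unfolding is_generic_rank_def by blast
  then obtain u where "u \<in> U" "u \<noteq> 0" unfolding zariski_open_def proj_pts_def by blast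
  then show ?thesis using U(3) rank_eq_0_iff[OF assms(1,2)] by fastforce
qed

section \<open>Sums of translates and the rank filtration\<close>

primrec translates :: "('k::field ^ 'n::finite) set \<Rightarrow> 'k ^ 'n \<Rightarrow> nat \<Rightarrow> ('k ^ 'n) set" where
  "translates X p 0 = {p}"
| "translates X p (Suc i) = {s + y | s y. s \<in> translates X p i \<and> y \<in> insert 0 X}"

lemma poly_irreducible_translates:
  fixes X :: "('k::field_char_0 ^ 'n::finite) set"
  assumes "irreducible_variety X"
  shows "poly_irreducible (translates X p i)"
proof (induction i)
  case 0
  then show ?case by (simp add: poly_irreducible_singleton)
next
  case (Suc i)
  then show ?case
    unfolding translates.simps by (rule poly_irreducible_sums[OF _ poly_irreducible_cone[OF assms]])
qed

lemma self_in_translates: "p \<in> translates X p i"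
  by (induction i) force+

lemma translates_add_in_span:
  assumes "zariski_closed X" "s \<in> translates X p i" "in_span_of X v r"
  shows "s + v \<in> translates X p (i + r)"
proof -
  obtain x c where x: "\<forall>l<r. x l \<in> X" and v: "v = (\<Sum>l<r. c l *s x l)"
    using assms(3) unfolding in_span_of_def by blast
  have "s + (\<Sum>l<j. c l *s x l) \<in> translates X p (i + j)" if "j \<le> r" for j
    using that
  proof (induction j)
    case 0
    then show ?case using assms(2) by simp
  next
    case (Suc j)
    have "s + (\<Sum>l<j. c l *s x l) \<in> translates X p (i + j)" using Suc by simp
    moreover have "c j *s x j \<in> insert 0 X" using Suc.prems x smult_in_cone[OF assms(1)] by simp
    ultimately have "(s + (\<Sum>l<j. c l *s x l)) + c j *s x j \<in> translates X p (Suc (i + j))"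
      unfolding translates.simps by blast
    then show ?case by (simp add: add.assoc)
  qed
  then show ?thesis using v by blast
qed

lemma zariski_closed_W: "zariski_closed (W X k)"
  unfolding W_def by (rule zariski_closed_zcl) blast

lemma W_generic_rank:
  assumes "is_generic_rank X g"
  shows "W X g = proj_pts"
proof
  show "W X g \<subseteq> proj_pts" by (rule zariski_closed_subset_proj_pts[OF zariski_closed_W])
  obtain U where U: "zariski_open U" "zcl U = proj_pts" "\<forall>u\<in>U. Defs.rank X u = g"
    using assms unfolding is_generic_rank_def by blast
  then have "U \<subseteq> {q \<in> proj_pts. Defs.rank X q = g}" unfolding zariski_open_def by blast
  then show "proj_pts \<subseteq> W X g" unfolding W_def using zcl_mono U(2) by metis
qed

context
  fixes X :: "('k::field_char_0 ^ 'n::finite) set"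
  assumes irreducible: "irreducible_variety X" and nondegenerate: "nondegenerate X"
begin

private lemma closed: "zariski_closed X"
  using irreducible by (rule irreducible_variety_closed)

text \<open>Since \<open>f p \<noteq> 0\<close> and \<open>p \<in> translates X p (Suc i)\<close>, irreducibility
  makes \<open>Q f\<close> nonzero at some \<open>s + y\<close> there, with \<open>y \<in> X \<union> {0}\<close>. The induction hypothesis for
  \<open>z \<mapsto> (Q f) (z + y)\<close> yields \<open>s'\<close> of rank at least \<open>k\<close> with \<open>(Q f) (s' + y) \<noteq> 0\<close>; then
  \<open>s' + y\<close> has rank at least \<open>k - 1\<close>, and rank exactly \<open>k - 1\<close> is excluded by \<open>f (s' + y) \<noteq> 0\<close>.\<close>
lemma translates_nonzero_rank_ge:
  assumes f: "poly_fun f" "f p \<noteq> 0" "\<And>s. s \<noteq> 0 \<Longrightarrow> Defs.rank X s = k - 1 \<Longrightarrow> f s = 0"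
    and "k \<le> Defs.rank X p" "1 < k"
    and "poly_fun Q" "\<exists>s\<in>translates X p i. Q s \<noteq> 0"
  shows "\<exists>s\<in>translates X p i. Q s \<noteq> 0 \<and> k \<le> Defs.rank X s"
  using assms(6,7)
proof (induction i arbitrary: Q)
  case 0
  then show ?case using assms(4) by simp
next
  case (Suc i)
  have "\<not> (\<forall>s\<in>translates X p (Suc i). Q s * f s = 0)"
    using poly_irreducible_translates[OF irreducible, of p "Suc i"] Suc.prems f(1,2)
      self_in_translates[of p X "Suc i"]
    unfolding poly_irreducible_def by blast
  then obtain s y where sy: "s \<in> translates X p i" "y \<in> insert 0 X" "Q (s + y) * f (s + y) \<noteq> 0"
    by auto
  have "poly_fun (\<lambda>z. Q (z + y) * f (z + y))"
    by (intro poly_fun_mult poly_fun_translate Suc.prems(1) f(1))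
  with sy obtain s' where s': "s' \<in> translates X p i" "Q (s' + y) * f (s' + y) \<noteq> 0"
    "k \<le> Defs.rank X s'"
    using Suc.IH by blast
  have "s' + y \<in> translates X p (Suc i)" using s'(1) sy(2) by auto
  moreover have "k - 1 \<le> Defs.rank X (s' + y)"
    using rank_le_Suc_rank_add[OF closed nondegenerate sy(2), of s'] s'(3) by simp
  moreover have "Defs.rank X (s' + y) \<noteq> k - 1"
    using f(3)[of "s' + y"] s'(2) rank_eq_0_iff[OF closed nondegenerate] \<open>1 < k\<close> by force
  ultimately show ?case using s'(2) by (intro bexI[of _ "s' + y"]) auto
qed

context
  fixes g :: nat
  assumes generic: "is_generic_rank X g"
begin

lemma rank_gt_generic_in_W:
  assumes "g < k" "p \<in> proj_pts" "Defs.rank X p = k"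
  shows "p \<in> W X (k - 1)"
proof -
  obtain U where U: "zariski_open U" "U \<noteq> {}" "\<forall>u\<in>U. Defs.rank X u = g"
    using generic unfolding is_generic_rank_def by blast
  then obtain u where "u \<in> U" by blast
  then obtain h where h: "hom_poly h" "h u \<noteq> 0" "\<And>s. s \<noteq> 0 \<Longrightarrow> h s \<noteq> 0 \<Longrightarrow> s \<in> U"
    using zariski_open_separating_poly U(1) by blast
  have "1 < k" using generic_rank_pos[OF closed nondegenerate generic] assms(1) by simp
  text \<open>Cancelling \<open>p\<close> against a decomposition into \<open>k\<close> points of \<open>X\<close> reaches \<open>0\<close>, and
    \<open>g\<close> more steps reach the generic point \<open>u\<close>.\<close>
  have "p + (- 1) *s p \<in> translates X p (0 + k)"
    using translates_add_in_span[OF closed self_in_translates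
        in_span_of_smult[OF in_span_of_rank[OF closed nondegenerate]]] assms(3) by metis
  then have "0 \<in> translates X p k" by simp
  moreover have "in_span_of X u g"
    using in_span_of_rank[OF closed nondegenerate, of u] U(3) \<open>u \<in> U\<close> by simp
  ultimately have "0 + u \<in> translates X p (k + g)" by (rule translates_add_in_span[OF closed])
  then have u: "\<exists>s\<in>translates X p (k + g). h s \<noteq> 0" using h(2) by auto
  have "f p = 0" if f: "hom_poly f" "\<forall>s\<in>{q \<in> proj_pts. Defs.rank X q = k - 1}. f s = 0" for f
  proof (rule ccontr)
    assume "f p \<noteq> 0"
    moreover have "f s = 0" if "s \<noteq> 0" "Defs.rank X s = k - 1" for s
      using f(2) that by (simp add: proj_pts_def)
    ultimately obtain s where s: "h s \<noteq> 0" "k \<le> Defs.rank X s"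
      using translates_nonzero_rank_ge[OF poly_fun_hom_poly[OF f(1)] _ _ _ \<open>1 < k\<close>
          poly_fun_hom_poly[OF h(1)] u] assms(3) by blast
    then have "s \<noteq> 0" using rank_eq_0_iff[OF closed nondegenerate] \<open>1 < k\<close> by force
    then show False using s h(3) U(3) assms(1) by fastforce
  qed
  then show ?thesis
    using assms(2) unfolding W_def by (subst zcl_eq_zero_set) (auto simp: zero_set_def proj_pts_def)
qed

lemma W_subset_W_pred:
  assumes "g < k"
  shows "W X k \<subseteq> W X (k - 1)"
proof -
  have "{p \<in> proj_pts. Defs.rank X p = k} \<subseteq> W X (k - 1)"
    using rank_gt_generic_in_W[OF assms] by blast
  then show ?thesis unfolding W_def[of X k] by (rule zcl_least[OF zariski_closed_W])
qed

lemma W_antimono: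
  assumes "g \<le> i" "i \<le> j"
  shows "W X j \<subseteq> W X i"
  using assms(2)
proof (induction j rule: dec_induct)
  case base
  then show ?case by simp
next
  case (step n)
  have "W X (Suc n) \<subseteq> W X n" using W_subset_W_pred[of "Suc n"] step(1) assms(1) by simp
  then show ?case using step.IH by blast
qed

lemma in_W_if_rank_ge:
  assumes "w \<noteq> 0" "g \<le> i" "i \<le> Defs.rank X w"
  shows "w \<in> W X i"
proof -
  have "w \<in> {q \<in> proj_pts. Defs.rank X q = Defs.rank X w}"
    using assms(1) by (simp add: proj_pts_def)
  then have "w \<in> W X (Defs.rank X w)" unfolding W_def by (rule subsetD[OF zcl_superset])
  then show ?thesis using W_antimono[OF assms(2,3)] by blast
qed

lemma join_W_subset_W_pred:
  assumes "g < k"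
  shows "join (W X k) X \<subseteq> W X (k - 1)"
proof -
  have "a *s p + b *s q \<in> W X (k - 1)"
    if "a *s p + b *s q \<noteq> 0" "p \<in> W X k" "q \<in> X" for p q a b
  proof (rule zcl_lines_in_closed[OF zariski_closed_W _ _ _ that(1)])
    show "{v \<in> proj_pts. Defs.rank X v = k} \<subseteq> proj_pts" by blast
    show "p \<in> zcl {v \<in> proj_pts. Defs.rank X v = k}" using that(2) unfolding W_def .
    fix v and a' :: 'k
    assume v: "v \<in> {v \<in> proj_pts. Defs.rank X v = k}" and "a' \<noteq> 0"
    define w where "w = a' *s v + b *s q"
    have "v = inverse a' *s w + (- (inverse a' * b)) *s q"
      using \<open>a' \<noteq> 0\<close> by (simp add: w_def vec_eq_iff field_simps)
    moreover have "Defs.rank X (inverse a' *s w + (- (inverse a' * b)) *s q)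
        \<le> Suc (Defs.rank X (inverse a' *s w))"
      by (rule rank_add_le[OF closed nondegenerate smult_in_cone[OF closed \<open>q \<in> X\<close>]])
    ultimately have "k - 1 \<le> Defs.rank X w"
      using v rank_smult[OF closed nondegenerate] \<open>a' \<noteq> 0\<close> by simp
    moreover have "0 < g" by (rule generic_rank_pos[OF closed nondegenerate generic])
    ultimately have "w \<noteq> 0"
      using assms rank_eq_0_iff[OF closed nondegenerate, of w] by auto
    then show "a' *s v + b *s q \<in> W X (k - 1)"
      using in_W_if_rank_ge \<open>k - 1 \<le> Defs.rank X w\<close> assms unfolding w_def by simp
  qed
  then show ?thesis
    unfolding join_def by (intro zcl_least zariski_closed_W) blast
qed

end

end

theorem theorem3p1:
  fixes X :: "('k::field_char_0 ^ 'n::finite) set" and g m :: nat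
  assumes "alg_closed TYPE('k)"
    and "irreducible_variety X" and "nondegenerate X"
    and "is_generic_rank X g" and "is_max_rank X m"
  shows "(\<forall>k. g + 1 \<le> k \<and> k \<le> m \<longrightarrow> join (W X k) X \<subseteq> W X (k - 1))
     \<and> (\<forall>k. g + 1 \<le> k \<and> k \<le> m \<longrightarrow> W X k \<subseteq> W X (k - 1))
     \<and> W X g = proj_pts"
proof (intro conjI allI impI)
  fix k assume "g + 1 \<le> k \<and> k \<le> m"
  then show "join (W X k) X \<subseteq> W X (k - 1)" by (intro join_W_subset_W_pred[OF assms(2-4)]) simp
next
  fix k assume "g + 1 \<le> k \<and> k \<le> m"
  then show "W X k \<subseteq> W X (k - 1)" by (intro W_subset_W_pred[OF assms(2-4)]) simp
next
  show "W X g = proj_pts" by (rule W_generic_rank[OF assms(4)])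
qed

end
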